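(* There exists a unique increasing function $u\in C^2(\mathbb{R})$ satisfying \[ u''(\xi)=(u(\xi)-\xi)\,u'(\xi),\quad \xi\in\mathbb{R}, \] such that, for some constants $c,C>0$, \[ \max\{0,\xi\}<u(\xi)<\max\{0,\xi\}+Ce^{-c|\xi|}\quad\text{for all }\xi\in\mathbb{R}. \] *)

theory Defs
  imports "HOL-Analysis.Analysis"
begin

definition C2_real :: "(real \<Rightarrow> real) \<Rightarrow> bool" where
  "C2_real u \<longleftrightarrow>
     (\<forall>x. u differentiable (at x)) \<and>
     (\<forall>x. deriv u differentiable (at x)) \<and>
     continuous_on UNIV (deriv (deriv u))"

end

(* Along a solution, E = (u - \<xi>)^2/2 - u' + ln u' is constant, and the tail conditions
   force E = -1. Then 0 < u' < 1 and u - \<xi> = gap u' with gap p = sqrt (2 (p - 1 - ln p)).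
   Taking p = u' as parameter, du/dp = 1/gap p and d\<xi>/dp = 1/(p gap p), so up to the
   symmetry (\<xi>, u) \<mapsto> (\<xi> + D, u + D) of the equation every such solution is the curve
   p \<mapsto> (orbit_xi p, orbit_u p), and its limit 0 at -\<infinity> forces D = 0. Conversely this
   curve is the graph of a solution, whose tails are exponential by Gronwall's inequality. *)

theory Submission
  imports Defs "HOL-Real_Asymp.Real_Asymp"
begin

section \<open>Gronwall's inequality\<close>

lemma gronwall_upper:
  fixes f f' :: "real \<Rightarrow> real"
  assumes "a \<le> b"
    and deriv: "\<And>t. t \<in> {a..b} \<Longrightarrow> (f has_real_derivative f' t) (at t)"
    and growth: "\<And>t. t \<in> {a<..<b} \<Longrightarrow> f' t \<le> k * f t"
  shows "f b \<le> f a * exp (k * (b - a))"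
proof -
  define g where "g t = f t * exp (- k * t)" for t
  have "g b \<le> g a"
  proof (rule DERIV_nonpos_imp_decreasing_open[OF \<open>a \<le> b\<close>])
    fix t assume t: "a < t" "t < b"
    have "(g has_real_derivative (f' t - k * f t) * exp (- k * t)) (at t)"
      unfolding g_def using deriv[of t] t
      by (auto intro!: derivative_eq_intros simp: algebra_simps)
    moreover have "(f' t - k * f t) * exp (- k * t) \<le> 0"
      using growth[of t] t by (simp add: mult_nonpos_nonneg)
    ultimately show "\<exists>y. (g has_real_derivative y) (at t) \<and> y \<le> 0" by blast
  next
    show "continuous_on {a..b} g"
      unfolding g_def using deriv
      by (intro continuous_at_imp_continuous_on ballI continuous_intros DERIV_isCont) auto
  qed
  then have "f b * exp (- k * b) * exp (k * b) \<le> f a * exp (- k * a) * exp (k * b)"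
    by (simp add: g_def)
  then show ?thesis by (simp add: mult.assoc flip: exp_add) (simp add: algebra_simps)
qed

lemma gronwall_lower:
  fixes f f' :: "real \<Rightarrow> real"
  assumes "a \<le> b"
    and deriv: "\<And>t. t \<in> {a..b} \<Longrightarrow> (f has_real_derivative f' t) (at t)"
    and growth: "\<And>t. t \<in> {a<..<b} \<Longrightarrow> k * f t \<le> f' t"
  shows "f a * exp (k * (b - a)) \<le> f b"
  using gronwall_upper[of a b "\<lambda>t. - f t" "\<lambda>t. - f' t" k] assms
  by (auto intro: DERIV_minus)

lemma linear_ode_zero_forward:
  fixes w g :: "real \<Rightarrow> real"
  assumes deriv: "\<And>t. t \<in> {a..b} \<Longrightarrow> (w has_real_derivative g t * w t) (at t)"
    and "continuous_on {a..b} g" and "w a = 0" and t: "t \<in> {a..b}"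
  shows "w t = 0"
proof -
  obtain s where "s \<in> {a..b}" and M: "\<And>r. r \<in> {a..b} \<Longrightarrow> g r \<le> g s"
    using continuous_attains_sup[of "{a..b}" g] assms(2) t by auto
  have "(w t)\<^sup>2 \<le> (w a)\<^sup>2 * exp (2 * g s * (t - a))"
  proof (rule gronwall_upper[where f' = "\<lambda>r. 2 * g r * (w r)\<^sup>2"])
    fix r assume "r \<in> {a..t}"
    then show "((\<lambda>r. (w r)\<^sup>2) has_real_derivative 2 * g r * (w r)\<^sup>2) (at r)"
      using t deriv[of r] by (auto intro!: derivative_eq_intros simp: power2_eq_square)
  next
    fix r assume "r \<in> {a<..<t}"
    then show "2 * g r * (w r)\<^sup>2 \<le> 2 * g s * (w r)\<^sup>2"
      using t M[of r] by (auto intro: mult_right_mono)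
  qed (use t in auto)
  then show ?thesis using \<open>w a = 0\<close> by simp
qed

section \<open>The energy level \<open>-1\<close> parametrised by the slope\<close>

definition gap :: "real \<Rightarrow> real" where
  "gap p = sqrt (2 * (p - 1 - ln p))"

lemma gap_squared: "0 < p \<Longrightarrow> (gap p)\<^sup>2 = 2 * (p - 1 - ln p)"
  unfolding gap_def using ln_le_minus_one[of p] by simp

lemma gap_pos: "0 < p \<Longrightarrow> p \<noteq> 1 \<Longrightarrow> 0 < gap p"
  unfolding gap_def using ln_diff_less[of p 1] by simp

lemma gap_has_derivative:
  assumes "0 < p" "p \<noteq> 1"
  shows "(gap has_real_derivative (1 - 1 / p) / gap p) (at p)"
proof -
  have "0 < 2 * (p - 1 - ln p)" using ln_diff_less[of p 1] assms by simp
  then show ?thesis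
    unfolding gap_def[abs_def] using assms
    by (auto intro!: derivative_eq_intros simp: field_simps)
qed

lemma isCont_gap: "0 < p \<Longrightarrow> p \<noteq> 1 \<Longrightarrow> isCont gap p"
  using gap_has_derivative DERIV_isCont by blast

lemma gap_antimono:
  assumes "0 < a" "a \<le> b" "b \<le> 1"
  shows "gap b \<le> gap a"
proof -
  have "b - 1 - ln b \<le> a - 1 - ln a"
  proof (rule DERIV_nonpos_imp_decreasing_open[OF assms(2)])
    fix x assume "a < x" "x < b"
    then show "\<exists>y. ((\<lambda>p. p - 1 - ln p) has_real_derivative y) (at x) \<and> y \<le> 0"
      using assms by (intro exI[of _ "1 - 1 / x"]) (auto intro!: derivative_eq_intros)
  next
    show "continuous_on {a..b} (\<lambda>p. p - 1 - ln p)"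
      using assms by (intro continuous_intros) auto
  qed
  then show ?thesis unfolding gap_def by simp
qed

lemma gap_squared_le:
  assumes "0 < p"
  shows "p * (gap p)\<^sup>2 \<le> 2 * (1 - p)\<^sup>2"
proof -
  have "- ln p \<le> 1 / p - 1"
    using ln_le_minus_one[of "1 / p"] assms by (simp add: ln_div)
  then have "p * (p - 1 - ln p) \<le> (1 - p)\<^sup>2"
    using assms by (simp add: field_simps power2_eq_square)
  moreover have "p * (gap p)\<^sup>2 = 2 * (p * (p - 1 - ln p))"
    using gap_squared[OF assms] by simp
  ultimately show ?thesis by linarith
qed

lemma gap_le_near_1:
  assumes "1/2 \<le> p" "p \<le> 1"
  shows "gap p \<le> 2 * (1 - p)"
proof (rule power2_le_imp_le)
  have "2 * (1 - p)\<^sup>2 \<le> (4 * p) * (1 - p)\<^sup>2"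
    using assms by (intro mult_right_mono) auto
  moreover have "(2 * (1 - p))\<^sup>2 = 4 * (1 - p)\<^sup>2"
    by (simp add: power2_eq_square algebra_simps)
  ultimately have "2 * (1 - p)\<^sup>2 \<le> p * (2 * (1 - p))\<^sup>2"
    by simp
  then have "p * (gap p)\<^sup>2 \<le> p * (2 * (1 - p))\<^sup>2"
    using gap_squared_le[of p] assms by linarith
  then show "(gap p)\<^sup>2 \<le> (2 * (1 - p))\<^sup>2"
    using assms by (simp only: mult_le_cancel_left_pos)
qed (use assms in simp)

lemma gap_at_right_0: "filterlim gap at_top (at_right 0)"
  unfolding gap_def[abs_def] by real_asymp

text \<open>Since \<open>ln 0 = 0\<close>, \<open>gap 0 = - sqrt 2\<close>; \<open>inv_gap\<close> is the continuous
  extension of \<open>1 / gap\<close> by \<open>0\<close> at \<open>0\<close>.\<close>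
definition inv_gap :: "real \<Rightarrow> real" where
  "inv_gap q = (if q \<le> 0 then 0 else 1 / gap q)"

lemma inv_gap_at_right_0: "(inv_gap \<longlongrightarrow> 0) (at_right 0)"
proof -
  have "eventually (\<lambda>q. inverse (gap q) = inv_gap q) (at_right 0)"
    by (auto simp: inv_gap_def divide_inverse intro: eventually_mono[OF eventually_at_right_less])
  then show ?thesis
    by (rule Lim_transform_eventually[OF tendsto_inverse_0_at_top[OF gap_at_right_0]])
qed

lemma continuous_on_inv_gap:
  assumes "b < 1"
  shows "continuous_on {0..b} inv_gap"
  unfolding continuous_on_eq_continuous_within
proof
  fix x assume x: "x \<in> {0..b}"
  show "continuous (at x within {0..b}) inv_gap"
  proof (cases "x = 0")
    case True
    have "continuous (at 0 within {0..}) inv_gap"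
      using inv_gap_at_right_0 by (simp add: continuous_within at_within_Ici_at_right inv_gap_def)
    then show ?thesis using True by (auto intro: continuous_within_subset)
  next
    case False
    then have "0 < x" "x < 1" using x assms by auto
    have ev: "eventually (\<lambda>q. 1 / gap q = inv_gap q) (nhds x)"
      using eventually_nhds_in_open[of "{0<..}" x] \<open>0 < x\<close>
      by (auto simp: inv_gap_def elim!: eventually_mono)
    have "isCont (\<lambda>q. 1 / gap q) x"
      using isCont_gap[of x] gap_pos[of x] \<open>0 < x\<close> \<open>x < 1\<close> by (intro continuous_intros) auto
    then have "isCont inv_gap x" using isCont_cong[OF ev] by simp
    then show ?thesis by (rule continuous_at_imp_continuous_at_within)
  qed
qed

definition orbit_u :: "real \<Rightarrow> real" where
  "orbit_u p = integral {0..p} inv_gap"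

lemma continuous_on_orbit_u: "b < 1 \<Longrightarrow> continuous_on {0..b} orbit_u"
  unfolding orbit_u_def[abs_def]
  by (intro indefinite_integral_continuous_1 integrable_continuous_interval continuous_on_inv_gap)

lemma orbit_u_has_derivative:
  assumes "0 < p" "p < 1"
  shows "(orbit_u has_real_derivative 1 / gap p) (at p)"
proof -
  define b where "b = (1 + p) / 2"
  have b: "p < b" "b < 1" using assms by (auto simp: b_def)
  have "(orbit_u has_real_derivative inv_gap p) (at p within {0..b})"
    unfolding orbit_u_def[abs_def]
    using b assms by (intro integral_has_real_derivative continuous_on_inv_gap) auto
  moreover have "at p within {0..b} = at p"
    using b assms by (intro at_within_Icc_at) auto
  ultimately show ?thesis using assms by (simp add: inv_gap_def)
qed

lemma orbit_u_strict_mono: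
  assumes "0 \<le> a" "a < b" "b < 1"
  shows "orbit_u a < orbit_u b"
proof (rule DERIV_pos_imp_increasing_open[OF assms(2)])
  fix x assume "a < x" "x < b"
  then show "\<exists>y. (orbit_u has_real_derivative y) (at x) \<and> 0 < y"
    using orbit_u_has_derivative gap_pos assms by (intro exI[of _ "1 / gap x"]) auto
next
  show "continuous_on {a..b} orbit_u"
    using continuous_on_orbit_u[OF assms(3)] by (rule continuous_on_subset) (use assms in auto)
qed

lemma orbit_u_pos: "0 < p \<Longrightarrow> p < 1 \<Longrightarrow> 0 < orbit_u p"
  using orbit_u_strict_mono[of 0 p] by (simp add: orbit_u_def)

lemma orbit_u_le:
  assumes "0 < p" "p \<le> q" "q < 1"
  shows "orbit_u p \<le> p / gap q"
proof -
  have "orbit_u p \<le> integral {0..p} (\<lambda>_. 1 / gap q)"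
    unfolding orbit_u_def
  proof (rule integral_le)
    show "inv_gap integrable_on {0..p}"
      using assms by (intro integrable_continuous_interval continuous_on_inv_gap) auto
    fix s assume s: "s \<in> {0..p}"
    have "0 < gap q" using gap_pos[of q] assms by simp
    moreover have "gap q \<le> gap s" if "0 < s" using gap_antimono[of s q] s that assms by simp
    ultimately show "inv_gap s \<le> 1 / gap q"
      by (auto simp: inv_gap_def intro: divide_left_mono)
  qed auto
  then show ?thesis using assms by simp
qed

definition orbit_xi :: "real \<Rightarrow> real" where
  "orbit_xi p = orbit_u p - gap p"

lemma orbit_xi_has_derivative:
  assumes "0 < p" "p < 1"
  shows "(orbit_xi has_real_derivative 1 / (p * gap p)) (at p)"
proof -
  have "(orbit_xi has_real_derivative 1 / gap p - (1 - 1 / p) / gap p) (at p)"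
    unfolding orbit_xi_def[abs_def] using assms
    by (intro DERIV_diff orbit_u_has_derivative gap_has_derivative) auto
  then show ?thesis using assms gap_pos[of p] by (simp add: field_simps)
qed

lemma isCont_orbit_xi: "0 < p \<Longrightarrow> p < 1 \<Longrightarrow> isCont orbit_xi p"
  using orbit_xi_has_derivative DERIV_isCont by blast

lemma orbit_xi_strict_mono:
  assumes "0 < a" "a < b" "b < 1"
  shows "orbit_xi a < orbit_xi b"
proof (rule DERIV_pos_imp_increasing[OF assms(2)])
  fix x assume "a \<le> x" "x \<le> b"
  then show "\<exists>y. (orbit_xi has_real_derivative y) (at x) \<and> 0 < y"
    using orbit_xi_has_derivative gap_pos assms by (intro exI[of _ "1 / (x * gap x)"]) auto
qed

lemma orbit_xi_at_right_0: "filterlim orbit_xi at_bot (at_right 0)"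
proof (rule filterlim_at_bot_mono)
  show "filterlim (\<lambda>p. orbit_u (1/2) - gap p) at_bot (at_right 0)"
    unfolding gap_def by real_asymp
  have "eventually (\<lambda>p. p \<in> {0<..<1/2}) (at_right (0::real))"
    by (rule eventually_at_right_real) simp
  then show "eventually (\<lambda>p. orbit_xi p \<le> orbit_u (1/2) - gap p) (at_right 0)"
  proof eventually_elim
    case (elim p)
    then show ?case using orbit_u_strict_mono[of p "1/2"] by (simp add: orbit_xi_def)
  qed
qed

text \<open>Near \<open>p = 1\<close> the integrand \<open>1 / gap p\<close> of \<open>orbit_u\<close> dominates
  \<open>1 / (2 * (1 - p))\<close>, which makes \<open>orbit_xi\<close> unbounded above.\<close>
lemma orbit_u_plus_half_ln_mono:
  assumes "1/2 \<le> a" "a \<le> b" "b < 1"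
  shows "orbit_u a + ln (1 - a) / 2 \<le> orbit_u b + ln (1 - b) / 2"
proof (rule DERIV_nonneg_imp_increasing_open[OF assms(2)])
  fix p assume p: "a < p" "p < b"
  have "1 / (2 * (1 - p)) \<le> 1 / gap p"
    using gap_le_near_1[of p] gap_pos[of p] p assms by (intro divide_left_mono) auto
  moreover have "((\<lambda>p. orbit_u p + ln (1 - p) / 2) has_real_derivative
      1 / gap p - 1 / (2 * (1 - p))) (at p)"
    using p assms gap_pos[of p]
    by (auto intro!: derivative_eq_intros orbit_u_has_derivative simp: field_simps)
  ultimately show "\<exists>y. ((\<lambda>p. orbit_u p + ln (1 - p) / 2) has_real_derivative y) (at p) \<and> 0 \<le> y"
    by force
next
  have "isCont orbit_u p" if "a \<le> p" "p \<le> b" for p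
    using orbit_u_has_derivative[of p] DERIV_isCont that assms by auto
  then show "continuous_on {a..b} (\<lambda>p. orbit_u p + ln (1 - p) / 2)"
    using assms by (intro continuous_at_imp_continuous_on ballI continuous_intros) auto
qed

lemma orbit_xi_at_left_1: "filterlim orbit_xi at_top (at_left 1)"
proof (rule filterlim_at_top_mono)
  define A where "A = orbit_u (1/2) + ln (1/2) / 2 - 1"
  show "filterlim (\<lambda>p. A - ln (1 - p) / 2) at_top (at_left 1)"
    by real_asymp
  have "eventually (\<lambda>p. p \<in> {1/2<..<1}) (at_left (1::real))"
    by (rule eventually_at_left_real) simp
  then show "eventually (\<lambda>p. A - ln (1 - p) / 2 \<le> orbit_xi p) (at_left 1)"
  proof eventually_elim
    case (elim p)
    then have "gap p \<le> 1" using gap_le_near_1[of p] by auto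
    then show ?case
      using orbit_u_plus_half_ln_mono[of "1/2" p] elim by (auto simp: A_def orbit_xi_def)
  qed
qed

lemma bij_betw_orbit_xi: "bij_betw orbit_xi {0<..<1} UNIV"
proof (rule bij_betw_imageI)
  show "inj_on orbit_xi {0<..<1}"
    by (rule inj_onI, rule ccontr) (auto dest: orbit_xi_strict_mono simp: neq_iff)
  show "orbit_xi ` {0<..<1} = UNIV"
  proof (intro set_eqI iffI)
    fix x :: real
    have "eventually (\<lambda>p. orbit_xi p \<le> x \<and> p \<in> {0<..<1/2}) (at_right 0)"
      using filterlim_at_bot[THEN iffD1, OF orbit_xi_at_right_0]
        eventually_at_right_real[of 0 "1/2"] by (auto intro: eventually_conj)
    then obtain a where a: "orbit_xi a \<le> x" "0 < a" "a < 1/2"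
      using eventually_happens[of _ "at_right (0::real)"] by auto
    have "eventually (\<lambda>p. x \<le> orbit_xi p \<and> p \<in> {1/2<..<1}) (at_left 1)"
      using filterlim_at_top[THEN iffD1, OF orbit_xi_at_left_1]
        eventually_at_left_real[of "1/2" 1] by (auto intro: eventually_conj)
    then obtain b where b: "x \<le> orbit_xi b" "1/2 < b" "b < 1"
      using eventually_happens[of _ "at_left (1::real)"] by auto
    have "continuous_on {a..b} orbit_xi"
      using a b by (intro continuous_at_imp_continuous_on ballI isCont_orbit_xi) auto
    then obtain p where "a \<le> p" "p \<le> b" "orbit_xi p = x"
      using IVT'[of orbit_xi a x b] a b by auto
    with a b show "x \<in> orbit_xi ` {0<..<1}" by force
  qed simp
qed

definition slope :: "real \<Rightarrow> real" where
  "slope = inv_into {0<..<1} orbit_xi"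

lemma slope_bounds: "0 < slope x" "slope x < 1"
  using bij_betw_apply[OF bij_betw_inv_into[OF bij_betw_orbit_xi]] by (auto simp: slope_def)

lemma gap_slope_pos: "0 < gap (slope x)"
  using gap_pos slope_bounds[of x] by simp

lemma orbit_xi_slope [simp]: "orbit_xi (slope x) = x"
  using bij_betw_inv_into_right[OF bij_betw_orbit_xi] by (simp add: slope_def)

lemma slope_orbit_xi: "0 < p \<Longrightarrow> p < 1 \<Longrightarrow> slope (orbit_xi p) = p"
  using bij_betw_inv_into_left[OF bij_betw_orbit_xi] by (simp add: slope_def)

lemma slope_mono: "mono slope"
proof (rule monoI, rule ccontr)
  fix x y :: real assume "x \<le> y" "\<not> slope x \<le> slope y"
  then have "orbit_xi (slope y) < orbit_xi (slope x)"
    using slope_bounds by (intro orbit_xi_strict_mono) auto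
  with \<open>x \<le> y\<close> show False by simp
qed

lemma isCont_slope: "isCont slope x"
proof -
  define p where "p = slope x"
  have p: "0 < p" "p < 1" using slope_bounds by (auto simp: p_def)
  have "isCont slope (orbit_xi p)"
  proof (rule isCont_inverse_function2[where f = orbit_xi and x = p and a = "p/2" and b = "(1 + p)/2"])
    fix z assume "p/2 \<le> z" "z \<le> (1 + p)/2"
    then have z: "0 < z" "z < 1" using p by auto
    show "slope (orbit_xi z) = z" using slope_orbit_xi[OF z] .
    show "isCont orbit_xi z" using isCont_orbit_xi[OF z] .
  qed (use p in auto)
  then show ?thesis by (simp add: p_def)
qed

lemma slope_has_derivative: "(slope has_real_derivative slope x * gap (slope x)) (at x)"
proof -
  define p where "p = slope x"
  have p: "0 < p" "p < 1" using slope_bounds by (auto simp: p_def)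
  have "(slope has_real_derivative inverse (1 / (p * gap p))) (at x)"
  proof (rule DERIV_inverse_function[where f = orbit_xi and a = "x - 1" and b = "x + 1"])
    show "(orbit_xi has_real_derivative 1 / (p * gap p)) (at (slope x))"
      using orbit_xi_has_derivative p by (simp add: p_def)
    show "1 / (p * gap p) \<noteq> 0" using p gap_pos[of p] by simp
  qed (simp_all add: isCont_slope)
  then show ?thesis by (simp add: p_def)
qed

definition profile :: "real \<Rightarrow> real" where
  "profile x = orbit_u (slope x)"

lemma profile_has_derivative: "(profile has_real_derivative slope x) (at x)"
proof -
  have "(profile has_real_derivative 1 / gap (slope x) * (slope x * gap (slope x))) (at x)"
    unfolding profile_def[abs_def]
    using slope_bounds by (intro DERIV_chain2[OF orbit_u_has_derivative slope_has_derivative])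
  then show ?thesis using gap_slope_pos[of x] by simp
qed

lemma profile_minus_id: "profile x - x = gap (slope x)"
  using orbit_xi_slope[of x] by (simp add: orbit_xi_def profile_def)

lemma profile_pos: "0 < profile x"
  using slope_bounds orbit_u_pos by (simp add: profile_def)

lemma deriv_profile: "deriv profile = slope"
  using profile_has_derivative DERIV_imp_deriv by blast

lemma profile_ode: "deriv (deriv profile) x = (profile x - x) * deriv profile x"
  by (simp add: deriv_profile DERIV_imp_deriv[OF slope_has_derivative] profile_minus_id)

lemma C2_profile: "C2_real profile"
  unfolding C2_real_def deriv_profile
proof (intro conjI allI)
  show "profile differentiable (at x)" for x
    using profile_has_derivative real_differentiable_def by blast
  show "slope differentiable (at x)" for x
    using slope_has_derivative real_differentiable_def by blast
  have "isCont (\<lambda>x. slope x * gap (slope x)) x" for x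
    using slope_bounds[of x]
    by (intro continuous_intros isCont_slope isCont_o2[OF isCont_slope] isCont_gap) auto
  moreover have "deriv slope = (\<lambda>x. slope x * gap (slope x))"
    using DERIV_imp_deriv[OF slope_has_derivative] by blast
  ultimately show "continuous_on UNIV (deriv slope)"
    by (simp add: continuous_at_imp_continuous_on)
qed

lemma strict_mono_profile: "strict_mono profile"
proof (rule strict_monoI)
  fix x y :: real assume "x < y"
  then show "profile x < profile y"
  proof (rule DERIV_pos_imp_increasing)
    fix z show "\<exists>d. (profile has_real_derivative d) (at z) \<and> 0 < d"
      using profile_has_derivative[of z] slope_bounds[of z] by blast
  qed
qed

lemma profile_left_tail:
  assumes "x \<le> 0"
  shows "profile x \<le> profile 0 * exp (gap (slope 0) * x)"
proof -
  define k where "k = gap (slope 0)"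
  have k: "0 < k" using gap_slope_pos by (simp add: k_def)
  have "profile x * exp (k * (0 - x)) \<le> profile 0"
  proof (rule gronwall_lower[where f' = slope])
    fix t assume "t \<in> {x<..<0}"
    then have "slope t \<le> slope 0" using monoD[OF slope_mono, of t 0] by simp
    then have "profile t \<le> slope t / k"
      unfolding profile_def k_def using slope_bounds by (intro orbit_u_le) auto
    then show "k * profile t \<le> slope t" using k by (simp add: field_simps)
  qed (use assms profile_has_derivative in auto)
  then show ?thesis by (simp add: k_def exp_minus field_simps)
qed

lemma profile_right_tail:
  assumes "0 \<le> x"
  shows "profile x - x \<le> gap (slope 0) * exp (- sqrt (slope 0 / 2) * x)"
proof -
  define k where "k = sqrt (slope 0 / 2)"
  have "profile x - x \<le> (profile 0 - 0) * exp (- k * (x - 0))"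
  proof (rule gronwall_upper[where f = "\<lambda>t. profile t - t" and f' = "\<lambda>t. slope t - 1"])
    fix t assume "t \<in> {0..x}"
    show "((\<lambda>t. profile t - t) has_real_derivative slope t - 1) (at t)"
      by (intro DERIV_diff profile_has_derivative DERIV_ident)
  next
    fix t assume "t \<in> {0<..<x}"
    define p where "p = slope t"
    have p: "slope 0 \<le> p" "0 < p" "p < 1"
      using \<open>t \<in> {0<..<x}\<close> monoD[OF slope_mono, of 0 t] slope_bounds[of t]
      by (auto simp: p_def)
    have "(k * gap p)\<^sup>2 = slope 0 / 2 * (gap p)\<^sup>2"
      using slope_bounds[of 0] by (simp add: k_def power_mult_distrib)
    also have "\<dots> \<le> p / 2 * (gap p)\<^sup>2" using p by (intro mult_right_mono) auto
    also have "\<dots> = p * (gap p)\<^sup>2 / 2" by simp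
    also have "\<dots> \<le> (1 - p)\<^sup>2" using gap_squared_le[of p] p by linarith
    finally have "k * gap p \<le> 1 - p" by (rule power2_le_imp_le) (use p in simp)
    then show "slope t - 1 \<le> - k * (profile t - t)"
      by (simp add: profile_minus_id p_def)
  qed (fact assms)
  then show ?thesis using profile_minus_id[of 0] by (simp add: k_def)
qed

lemma profile_bounds:
  "\<exists>c C :: real. c > 0 \<and> C > 0 \<and>
     (\<forall>\<xi>. max 0 \<xi> < profile \<xi> \<and> profile \<xi> < max 0 \<xi> + C * exp (- c * \<bar>\<xi>\<bar>))"
proof (intro exI conjI allI)
  define k\<^sub>1 k\<^sub>2 where "k\<^sub>1 = gap (slope 0)" and "k\<^sub>2 = sqrt (slope 0 / 2)"
  have k: "0 < k\<^sub>1" "0 < k\<^sub>2"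
    using slope_bounds[of 0] gap_slope_pos[of 0] by (auto simp: k\<^sub>1_def k\<^sub>2_def)
  show "0 < min k\<^sub>1 k\<^sub>2" "0 < profile 0 + k\<^sub>1"
    using k profile_pos[of 0] by auto
  fix x :: real
  show "max 0 x < profile x"
    using profile_pos[of x] profile_minus_id[of x] gap_slope_pos[of x] by auto
  show "profile x < max 0 x + (profile 0 + k\<^sub>1) * exp (- min k\<^sub>1 k\<^sub>2 * \<bar>x\<bar>)"
  proof (cases "x \<le> 0")
    case True
    have "profile x \<le> profile 0 * exp (k\<^sub>1 * x)"
      using profile_left_tail[OF True] by (simp add: k\<^sub>1_def)
    also have "\<dots> \<le> profile 0 * exp (min k\<^sub>1 k\<^sub>2 * x)"
      using True profile_pos[of 0] by (intro mult_left_mono) (auto intro: mult_right_mono_neg)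
    also have "\<dots> < (profile 0 + k\<^sub>1) * exp (min k\<^sub>1 k\<^sub>2 * x)"
      using k by simp
    finally show ?thesis using True by simp
  next
    case False
    have "profile x - x \<le> k\<^sub>1 * exp (- k\<^sub>2 * x)"
      using profile_right_tail[of x] False by (simp add: k\<^sub>1_def k\<^sub>2_def)
    also have "\<dots> \<le> k\<^sub>1 * exp (- min k\<^sub>1 k\<^sub>2 * x)"
      using False k by (intro mult_left_mono) (auto intro: mult_right_mono)
    also have "\<dots> < (profile 0 + k\<^sub>1) * exp (- min k\<^sub>1 k\<^sub>2 * x)"
      using profile_pos[of 0] by simp
    finally show ?thesis using False by simp
  qed
qed

section \<open>Uniqueness\<close>

lemma tendsto_of_exp_bounds:
  fixes u :: "real \<Rightarrow> real"
  assumes "0 < c"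
    and lower: "\<And>x. max 0 x < u x"
    and upper: "\<And>x. u x < max 0 x + C * exp (- c * \<bar>x\<bar>)"
  shows "(u \<longlongrightarrow> 0) at_bot" and "((\<lambda>x. u x - x) \<longlongrightarrow> 0) at_top"
proof -
  show "(u \<longlongrightarrow> 0) at_bot"
  proof (rule real_tendsto_sandwich)
    have "0 \<le> u x" for x using lower[of x] by simp
    then show "eventually (\<lambda>x. 0 \<le> u x) at_bot" by (simp add: always_eventually)
    have "eventually (\<lambda>x. x \<le> 0) (at_bot :: real filter)" by (rule eventually_le_at_bot)
    then show "eventually (\<lambda>x. u x \<le> C * exp (c * x)) at_bot"
    proof eventually_elim
      case (elim x)
      then show ?case using upper[of x] by simp
    qed
    show "((\<lambda>x. C * exp (c * x)) \<longlongrightarrow> 0) at_bot" using \<open>0 < c\<close> by real_asymp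
  qed simp
  show "((\<lambda>x. u x - x) \<longlongrightarrow> 0) at_top"
  proof (rule real_tendsto_sandwich)
    have "0 \<le> u x - x" for x using lower[of x] by simp
    then show "eventually (\<lambda>x. 0 \<le> u x - x) at_top" by (simp add: always_eventually)
    have "eventually (\<lambda>x. 0 \<le> x) (at_top :: real filter)" by (rule eventually_ge_at_top)
    then show "eventually (\<lambda>x. u x - x \<le> C * exp (- c * x)) at_top"
    proof eventually_elim
      case (elim x)
      then show ?case using upper[of x] by simp
    qed
    show "((\<lambda>x. C * exp (- c * x)) \<longlongrightarrow> 0) at_top" using \<open>0 < c\<close> by real_asymp
  qed simp
qed

locale front_solution =
  fixes u w :: "real \<Rightarrow> real" and c C :: real
  assumes has_derivative_u: "(u has_real_derivative w x) (at x)"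
    and has_derivative_w: "(w has_real_derivative (u x - x) * w x) (at x)"
    and mono_u: "mono u"
    and c_pos: "0 < c"
    and lower_bound: "max 0 x < u x"
    and upper_bound: "u x < max 0 x + C * exp (- c * \<bar>x\<bar>)"
begin

lemma isCont_u: "isCont u x"
  using has_derivative_u DERIV_isCont by blast

lemma isCont_w: "isCont w x"
  using has_derivative_w DERIV_isCont by blast

lemma u_minus_id_pos: "0 < u x - x"
  using lower_bound[of x] by simp

lemma u_minus_id_tendsto: "((\<lambda>x. u x - x) \<longlongrightarrow> 0) at_top"
  using tendsto_of_exp_bounds(2)[OF c_pos lower_bound upper_bound] .

lemma u_tendsto: "(u \<longlongrightarrow> 0) at_bot"
  using tendsto_of_exp_bounds(1)[OF c_pos lower_bound upper_bound] .

lemma w_nonneg: "0 \<le> w x"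
  using mono_on_imp_deriv_nonneg[of UNIV u, OF _ has_derivative_u] mono_u
  by (simp add: mono_imp_mono_on)

text \<open>A zero of \<open>w\<close> at \<open>a\<close> propagates forward along the linear equation
  \<open>w' = (u - x) w\<close>, so \<open>u\<close> would be constant on some \<open>[a, b]\<close> with \<open>u a < b\<close>,
  contradicting \<open>b < u b\<close>.\<close>
lemma w_pos: "0 < w a"
proof (rule ccontr)
  assume "\<not> 0 < w a"
  then have "w a = 0" using w_nonneg[of a] by simp
  define b where "b = max a (u a) + 1"
  have w_zero: "w t = 0" if "t \<in> {a..b}" for t
  proof (rule linear_ode_zero_forward[where w = w and g = "\<lambda>t. u t - t" and a = a and b = b])
    show "continuous_on {a..b} (\<lambda>t. u t - t)"
      using isCont_u by (intro continuous_at_imp_continuous_on ballI continuous_intros)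
  qed (use has_derivative_w \<open>w a = 0\<close> that in auto)
  have "u b = u a"
  proof (rule DERIV_isconst_end[where f = u])
    show "a < b" by (simp add: b_def)
    show "continuous_on {a..b} u" using isCont_u by (simp add: continuous_at_imp_continuous_on)
    fix x assume "a < x" "x < b"
    then show "(u has_real_derivative 0) (at x)"
      using has_derivative_u[of x] w_zero[of x] by simp
  qed
  moreover have "b < u b" using lower_bound[of b] by simp
  ultimately show False by (simp add: b_def)
qed

definition energy :: "real \<Rightarrow> real" where
  "energy t = (u t - t)\<^sup>2 / 2 - w t + ln (w t)"

lemma energy_const: "energy t = energy s"
proof -
  have "(energy has_real_derivative 0) (at t)" for t
    unfolding energy_def[abs_def] using w_pos[of t] has_derivative_u[of t] has_derivative_w[of t]
    by (auto intro!: derivative_eq_intros simp: field_simps power2_eq_square)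
  then show ?thesis using DERIV_isconst_all by blast
qed

lemma w_lt_1_if_ne_1:
  assumes ne: "\<And>t. w t \<noteq> 1"
  shows "w t < 1"
proof (rule ccontr)
  assume "\<not> w t < 1"
  then have "1 < w t" using ne[of t] by simp
  have conn: "connected (range w)"
    using isCont_w by (intro connected_continuous_image continuous_at_imp_continuous_on) auto
  have w_gt_1: "1 < w s" for s
  proof (rule ccontr)
    assume "\<not> 1 < w s"
    then have "1 \<in> range w"
      using connectedD_interval[OF conn, of "w s" "w t" 1] \<open>1 < w t\<close> by auto
    with ne show False by auto
  qed
  have "eventually (\<lambda>s. u s - s < u 0 - 0) at_top"
    using order_tendstoD(2)[OF u_minus_id_tendsto u_minus_id_pos[of 0]] .
  moreover have "eventually (\<lambda>s. 0 \<le> s) (at_top :: real filter)" by (rule eventually_ge_at_top)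
  ultimately obtain s where s: "0 \<le> s" "u s - s < u 0 - 0"
    by (metis (mono_tags, lifting) eventually_conj eventually_happens' trivial_limit_at_top_linorder)
  have "u 0 - 0 \<le> u s - s"
  proof (rule DERIV_nonneg_imp_increasing_open[OF s(1)])
    fix x show "\<exists>y. ((\<lambda>x. u x - x) has_real_derivative y) (at x) \<and> 0 \<le> y"
      using DERIV_diff[OF has_derivative_u DERIV_ident, of x] w_gt_1[of x] by auto
  next
    show "continuous_on {0..s} (\<lambda>x. u x - x)"
      using isCont_u by (intro continuous_at_imp_continuous_on ballI continuous_intros)
  qed
  with s show False by simp
qed

text \<open>Since \<open>q - ln q \<ge> 1\<close>, the energy is at most \<open>(u t - t)\<^sup>2 / 2 - 1\<close>, which tends to \<open>-1\<close>.\<close>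
lemma energy_le_neg1: "energy t \<le> -1"
proof (rule tendsto_lowerbound)
  have "((\<lambda>s. (u s - s)\<^sup>2 / 2 - 1) \<longlongrightarrow> 0\<^sup>2 / 2 - 1) at_top"
    by (intro tendsto_intros u_minus_id_tendsto) simp
  then show "((\<lambda>s. (u s - s)\<^sup>2 / 2 - 1) \<longlongrightarrow> - 1) at_top"
    by simp
  have "energy t \<le> (u s - s)\<^sup>2 / 2 - 1" for s
    using ln_le_minus_one[OF w_pos[of s]] energy_const[of t s] unfolding energy_def[of s] by linarith
  then show "eventually (\<lambda>s. energy t \<le> (u s - s)\<^sup>2 / 2 - 1) at_top"
    by (simp add: always_eventually)
qed simp

text \<open>Below level \<open>-1\<close>, \<open>w\<close> would stay away from \<open>1\<close>, hence below \<open>1 - e\<close>,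
  and then \<open>u t - t\<close> would decrease at rate \<open>e\<close> and become negative.\<close>
lemma energy_ge_neg1: "-1 \<le> energy t"
proof (rule ccontr)
  assume "\<not> -1 \<le> energy t"
  then have d: "0 < - energy t - 1" by simp
  have level: "- energy t - 1 \<le> w s - 1 - ln (w s)" for s
    using energy_const[of t s] zero_le_power2[of "u s - s"] unfolding energy_def[of s] by linarith
  have "isCont (\<lambda>q::real. q - 1 - ln q) 1" by (intro continuous_intros) auto
  then have "(\<lambda>q::real. q - 1 - ln q) \<midarrow>1\<rightarrow> 0" by (simp add: isCont_def)
  from LIM_D[OF this d] obtain e where e: "0 < e"
    and near_1: "\<And>q. q \<noteq> 1 \<Longrightarrow> \<bar>q - 1\<bar> < e \<Longrightarrow> \<bar>q - 1 - ln q\<bar> < - energy t - 1"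
    by auto
  have "w s \<noteq> 1" for s using level[of s] d by auto
  then have w_le: "w s \<le> 1 - e" for s
    using w_lt_1_if_ne_1[of s] near_1[of "w s"] level[of s] by fastforce
  define T where "T = u 0 / e"
  have "u T - T + e * T \<le> u 0 - 0 + e * 0"
  proof (rule DERIV_nonpos_imp_decreasing_open[where f = "\<lambda>x. u x - x + e * x"])
    show "0 \<le> T" using lower_bound[of 0] e by (simp add: T_def)
    fix x show "\<exists>y. ((\<lambda>x. u x - x + e * x) has_real_derivative y) (at x) \<and> y \<le> 0"
      using has_derivative_u[of x] w_le[of x]
      by (intro exI[of _ "w x - 1 + e"]) (auto intro!: derivative_eq_intros)
  next
    show "continuous_on {0..T} (\<lambda>x. u x - x + e * x)"
      using isCont_u by (intro continuous_at_imp_continuous_on ballI continuous_intros)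
  qed
  then have "u T - T \<le> 0" using e by (simp add: T_def)
  with u_minus_id_pos[of T] show False by simp
qed

lemma energy_eq_neg1: "(u t - t)\<^sup>2 / 2 = w t - 1 - ln (w t)"
  using energy_le_neg1[of t] energy_ge_neg1[of t] by (simp add: energy_def)

lemma w_lt_1: "w t < 1"
proof (rule w_lt_1_if_ne_1)
  fix s show "w s \<noteq> 1" using energy_eq_neg1[of s] u_minus_id_pos[of s] by auto
qed

lemma u_minus_id_eq_gap: "u t - t = gap (w t)"
proof -
  have "(u t - t)\<^sup>2 = (gap (w t))\<^sup>2"
    using gap_squared[OF w_pos] energy_eq_neg1[of t] by simp
  moreover have "0 < gap (w t)" using gap_pos w_pos[of t] w_lt_1[of t] by simp
  ultimately show ?thesis
    using u_minus_id_pos[of t] by (auto intro: power2_eq_imp_eq)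
qed


text \<open>\<open>orbit_u (w t) - u t\<close> is constant, because its derivative is
  \<open>w' / gap w - w = 0\<close> by \<open>u - t = gap w\<close>.\<close>
lemma shift_of_profile: "\<exists>D. \<forall>t. u t = profile (t + D) - D"
proof -
  define D where "D = orbit_u (w 0) - u 0"
  have "((\<lambda>t. orbit_u (w t) - u t) has_real_derivative 0) (at t)" for t
  proof -
    have "((\<lambda>t. orbit_u (w t) - u t) has_real_derivative
        1 / gap (w t) * ((u t - t) * w t) - w t) (at t)"
      using w_pos[of t] w_lt_1[of t]
      by (intro DERIV_diff DERIV_chain2[OF orbit_u_has_derivative has_derivative_w] has_derivative_u)
    moreover have "0 < gap (w t)" using gap_pos w_pos[of t] w_lt_1[of t] by simp
    ultimately show ?thesis by (simp add: u_minus_id_eq_gap)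
  qed
  then have orbit_u_w: "orbit_u (w t) = u t + D" for t
    using DERIV_isconst_all[of "\<lambda>t. orbit_u (w t) - u t" t 0] by (simp add: D_def)
  have "w t = slope (t + D)" for t
  proof -
    have "orbit_xi (w t) = t + D"
      using orbit_u_w[of t] u_minus_id_eq_gap[of t] by (simp add: orbit_xi_def)
    then show ?thesis using slope_orbit_xi w_pos[of t] w_lt_1[of t] by metis
  qed
  then have "u t = profile (t + D) - D" for t
    using orbit_u_w[of t] by (simp add: profile_def)
  then show ?thesis by blast
qed

lemma eq_profile: "u = profile"
proof -
  obtain D where D: "\<And>t. u t = profile (t + D) - D"
    using shift_of_profile by blast
  obtain c' C' where "0 < c'"
    and "\<forall>x. max 0 x < profile x \<and> profile x < max 0 x + C' * exp (- c' * \<bar>x\<bar>)"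
    using profile_bounds by blast
  then have "(profile \<longlongrightarrow> 0) at_bot"
    by (intro tendsto_of_exp_bounds(1)[of c' _ C']) auto
  moreover have "filterlim (\<lambda>t. t + D) at_bot at_bot" by real_asymp
  ultimately have "((\<lambda>t. profile (t + D)) \<longlongrightarrow> 0) at_bot"
    by (rule filterlim_compose)
  then have "(u \<longlongrightarrow> 0 - D) at_bot"
    unfolding D by (rule tendsto_diff) simp
  from tendsto_unique[OF trivial_limit_at_bot_linorder this u_tendsto] have "D = 0" by simp
  then show ?thesis using D by auto
qed

end

lemma solution_eq_profile:
  assumes C2: "C2_real u" and "mono u"
    and ode: "\<And>\<xi>. deriv (deriv u) \<xi> = (u \<xi> - \<xi>) * deriv u \<xi>"
    and "0 < c" and bounds: "\<And>\<xi>. max 0 \<xi> < u \<xi> \<and> u \<xi> < max 0 \<xi> + C * exp (- c * \<bar>\<xi>\<bar>)"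
  shows "u = profile"
proof -
  from C2 have "(u has_real_derivative deriv u x) (at x)"
    and "(deriv u has_real_derivative deriv (deriv u) x) (at x)" for x
    by (simp_all add: C2_real_def DERIV_deriv_iff_real_differentiable)
  then interpret front_solution u "deriv u" c C
    using \<open>mono u\<close> \<open>0 < c\<close> bounds by unfold_locales (auto simp: ode)
  show ?thesis by (rule eq_profile)
qed

theorem proposition1p3:
  shows "\<exists>!u :: real \<Rightarrow> real.
     C2_real u \<and> mono u \<and>
     (\<forall>\<xi>. deriv (deriv u) \<xi> = (u \<xi> - \<xi>) * deriv u \<xi>) \<and>
     (\<exists>c C :: real. c > 0 \<and> C > 0 \<and>
        (\<forall>\<xi>. max 0 \<xi> < u \<xi> \<and> u \<xi> < max 0 \<xi> + C * exp (- c * \<bar>\<xi>\<bar>)))"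
proof (rule ex1I[of _ profile], intro conjI)
  show "C2_real profile" by (rule C2_profile)
  show "mono profile" by (rule strict_mono_mono[OF strict_mono_profile])
  show "\<forall>\<xi>. deriv (deriv profile) \<xi> = (profile \<xi> - \<xi>) * deriv profile \<xi>"
    using profile_ode by blast
qed (use profile_bounds solution_eq_profile in blast)+

end
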